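(* Let $R$ be a commutative ring with nonzero identity and $\delta$ an expansion of ideals of $R$ with $\delta(\{0\})=\{0\}$. Then $R$ is a field if and only if $R$ is a von Neumann regular ring and $\{0\}$ is a $\delta$-$n$-ideal of $R$.
   Context: An expansion of ideals of a ring $R$ is a map $\delta$ from the set of ideals of $R$ to itself such that $I\subseteq\delta(I)$ for every ideal $I$, and $\delta(I)\subseteq\delta(J)$ whenever $I\subseteq J$. $\sqrt{0}$ denotes the nilradical of $R$. Given an expansion $\delta$, a proper ideal $I$ of $R$ is a $\delta$-$n$-ideal if whenever $a,b\in R$ with $ab\in I$ and $a\notin\sqrt{0}$, then $b\in\delta(I)$. $R$ is von Neumann regular if for every $a\in R$ there is $x\in R$ with $a=a^2x$. *)

theory Defs
  imports "HOL-Algebra.Algebra"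
begin

definition nilradical :: "('a, 'b) ring_scheme \<Rightarrow> 'a set" where
  "nilradical R = {a \<in> carrier R. \<exists>n::nat. a [^]\<^bsub>R\<^esub> n = \<zero>\<^bsub>R\<^esub>}"

definition expansion_of_ideals :: "('a, 'b) ring_scheme \<Rightarrow> ('a set \<Rightarrow> 'a set) \<Rightarrow> bool" where
  "expansion_of_ideals R \<delta> \<longleftrightarrow>
     (\<forall>I. ideal I R \<longrightarrow> ideal (\<delta> I) R \<and> I \<subseteq> \<delta> I) \<and>
     (\<forall>I J. ideal I R \<longrightarrow> ideal J R \<longrightarrow> I \<subseteq> J \<longrightarrow> \<delta> I \<subseteq> \<delta> J)"

definition delta_n_ideal :: "('a, 'b) ring_scheme \<Rightarrow> ('a set \<Rightarrow> 'a set) \<Rightarrow> 'a set \<Rightarrow> bool" where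
  "delta_n_ideal R \<delta> I \<longleftrightarrow> ideal I R \<and> I \<noteq> carrier R \<and>
     (\<forall>a \<in> carrier R. \<forall>b \<in> carrier R.
        a \<otimes>\<^bsub>R\<^esub> b \<in> I \<longrightarrow> a \<notin> nilradical R \<longrightarrow> b \<in> \<delta> I)"

definition von_neumann_regular :: "('a, 'b) ring_scheme \<Rightarrow> bool" where
  "von_neumann_regular R \<longleftrightarrow>
     (\<forall>a \<in> carrier R. \<exists>x \<in> carrier R. a = (a \<otimes>\<^bsub>R\<^esub> a) \<otimes>\<^bsub>R\<^esub> x)"

end

theory Submission
  imports Defs
begin

text \<open>
  A field is von Neumann regular (take x = a\<inverse>) and, having no zero divisors, makes
  {0} a \<delta>-n-ideal for any \<delta> with 0 \<in> \<delta>{0}. Conversely, a von Neumann regular ring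
  is reduced, since a = a^(k+1) x^k for all k. So if {0} is a \<delta>-n-ideal and
  \<delta>{0} = {0}, then ab = 0 forces a = 0 or b = 0, i.e. R is a domain. Finally, in a
  domain a = a^2 x gives a(1 - ax) = 0, so every a \<noteq> 0 is a unit.
\<close>

lemma zero_in_nilradical:
  fixes R (structure)
  assumes "ring R"
  shows "\<zero> \<in> nilradical R"
proof -
  interpret ring R by fact
  have "\<zero> [^] (1::nat) = \<zero>" by simp
  then show ?thesis unfolding nilradical_def by blast
qed

lemma von_neumann_regular_pow_eq:
  fixes R (structure)
  assumes "cring R" "a \<in> carrier R" "x \<in> carrier R" "a = a \<otimes> a \<otimes> x"
  shows "a = a [^] Suc k \<otimes> x [^] k"
proof (induction k)
  case 0
  interpret cring R by fact
  show ?case using assms by simp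
next
  case (Suc k)
  interpret cring R by fact
  have "a [^] Suc (Suc k) \<otimes> x [^] Suc k = (a [^] Suc k \<otimes> x [^] k) \<otimes> (a \<otimes> x)"
    using assms by (simp add: m_ac)
  also have "\<dots> = a \<otimes> (a \<otimes> x)" using Suc by simp
  also have "\<dots> = a" using assms(2-4) by (simp add: m_assoc)
  finally show ?case by simp
qed

lemma von_neumann_regular_nilradical:
  fixes R (structure)
  assumes R: "cring R" and vnr: "von_neumann_regular R"
  shows "nilradical R = {\<zero>}"
proof -
  interpret cring R by fact
  have "a = \<zero>" if a: "a \<in> nilradical R" for a
  proof -
    obtain n :: nat where a_carr: "a \<in> carrier R" and n: "a [^] n = \<zero>"
      using a unfolding nilradical_def by blast
    obtain x where x: "x \<in> carrier R" "a = a \<otimes> a \<otimes> x"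
      using vnr a_carr unfolding von_neumann_regular_def by blast
    have "a = a [^] Suc n \<otimes> x [^] n"
      using von_neumann_regular_pow_eq[OF R a_carr x] .
    also have "\<dots> = \<zero>" using n a_carr x by (simp add: m_ac)
    finally show ?thesis .
  qed
  then show ?thesis using zero_in_nilradical[OF ring_axioms] by blast
qed

lemma field_imp_von_neumann_regular:
  fixes R (structure)
  assumes "field R"
  shows "von_neumann_regular R"
  unfolding von_neumann_regular_def
proof
  interpret field R by fact
  fix a assume a: "a \<in> carrier R"
  show "\<exists>x\<in>carrier R. a = a \<otimes> a \<otimes> x"
  proof (cases "a = \<zero>")
    case True
    then show ?thesis by auto
  next
    case False
    then have "a \<in> Units R" using a field_Units by blast
    then show ?thesis using a by (intro bexI[of _ "inv a"]) (simp_all add: m_assoc)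
  qed
qed

lemma domain_zero_delta_n_ideal:
  fixes R (structure)
  assumes "domain R" and "\<zero> \<in> \<delta> {\<zero>}"
  shows "delta_n_ideal R \<delta> {\<zero>}"
  unfolding delta_n_ideal_def
proof (intro conjI ballI impI)
  interpret domain R by fact
  show "ideal {\<zero>} R" by (rule zeroideal)
  show "{\<zero>} \<noteq> carrier R" using one_closed one_not_zero by blast
  fix a b
  assume "a \<in> carrier R" "b \<in> carrier R" "a \<otimes> b \<in> {\<zero>}" "a \<notin> nilradical R"
  moreover have "a \<noteq> \<zero>" using \<open>a \<notin> nilradical R\<close> zero_in_nilradical[OF ring_axioms] by blast
  ultimately have "b = \<zero>" using integral by blast
  then show "b \<in> \<delta> {\<zero>}" using assms(2) by simp
qed

lemma reduced_zero_delta_n_ideal_imp_domain: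
  fixes R (structure)
  assumes "cring R" and reduced: "nilradical R = {\<zero>}"
    and n_ideal: "delta_n_ideal R \<delta> {\<zero>}" and \<delta>_zero: "\<delta> {\<zero>} = {\<zero>}"
  shows "domain R"
proof (rule domainI[OF \<open>cring R\<close>])
  interpret cring R by fact
  show "\<one> \<noteq> \<zero>"
  proof
    assume "\<one> = \<zero>"
    then have "y = \<zero>" if "y \<in> carrier R" for y
      using that by (metis r_one r_null)
    then have "carrier R = {\<zero>}" by blast
    then show False using n_ideal unfolding delta_n_ideal_def by blast
  qed
  fix a b
  assume "a \<otimes> b = \<zero>" "a \<in> carrier R" "b \<in> carrier R"
  then show "a = \<zero> \<or> b = \<zero>"
    using n_ideal reduced \<delta>_zero unfolding delta_n_ideal_def by blast
qed

lemma von_neumann_regular_domain_imp_field: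
  fixes R (structure)
  assumes "domain R" and vnr: "von_neumann_regular R"
  shows "field R"
proof -
  interpret domain R by fact
  show ?thesis
  proof (rule cring_fieldI2)
    show "\<zero> \<noteq> \<one>" by simp
    fix a assume a: "a \<in> carrier R" "a \<noteq> \<zero>"
    obtain x where x: "x \<in> carrier R" "a = a \<otimes> a \<otimes> x"
      using vnr a unfolding von_neumann_regular_def by blast
    have "a \<otimes> (a \<otimes> x) = a \<otimes> \<one>" using a x by (simp add: m_assoc)
    then have "a \<otimes> x = \<one>" using a x m_lcancel[of a "a \<otimes> x" \<one>] by simp
    then show "\<exists>b\<in>carrier R. a \<otimes> b = \<one>" using x by blast
  qed
qed

theorem theorem2p10:
  fixes R (structure) and \<delta> :: "'a set \<Rightarrow> 'a set"
  assumes "cring R"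
    and "\<one>\<^bsub>R\<^esub> \<noteq> \<zero>\<^bsub>R\<^esub>"
    and "expansion_of_ideals R \<delta>"
    and "\<delta> {\<zero>\<^bsub>R\<^esub>} = {\<zero>\<^bsub>R\<^esub>}"
  shows "field R \<longleftrightarrow> von_neumann_regular R \<and> delta_n_ideal R \<delta> {\<zero>\<^bsub>R\<^esub>}"
proof
  \<comment> \<open>Only \<delta>{0} = {0} matters.\<close>
  assume "field R"
  then show "von_neumann_regular R \<and> delta_n_ideal R \<delta> {\<zero>}"
    using field_imp_von_neumann_regular domain_zero_delta_n_ideal field.axioms(1) assms(4)
    by blast
next
  assume "von_neumann_regular R \<and> delta_n_ideal R \<delta> {\<zero>}"
  then show "field R"
    using von_neumann_regular_domain_imp_field reduced_zero_delta_n_ideal_imp_domain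
      von_neumann_regular_nilradical assms(1,4)
    by blast
qed

end
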